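(* Let $H=(V_H,E_H)$ be a directed graph, let $k,\ell\in V_H$ with $k\ne\ell$, and let $j$ be a positive integer. Assume $H$ has no edges outgoing from $\ell$, and let $K$ be the graph obtained from $H$ by removing all edges outgoing from $k$. Then $$\mathcal F_j^{k,\ell}(H)=\bigcup_{i:\,(k\to i)\in E_H}\left\{(V_H,\,E_F\cup\{k\to i\})\ :\ F\in\mathcal F_{j-1}^{i,\ell}(K)\right\}.$$
   Context: Graphs are finite directed (multi)graphs. A spanning incoming forest of a graph is a spanning subgraph (containing all vertices) whose underlying undirected graph has no cycles and in which each node has at most one outgoing edge. $\mathcal F_j^{a,b}(H)$ denotes the set of spanning incoming forests of $H$ with exactly $j$ edges such that some connected component (of the underlying undirected graph) contains both $a$ and $b$ (when $a=b$ this is all $j$-edge spanning incoming forests). $E_F$ denotes the edge set of $F$. *)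

theory Defs
  imports Main
begin

text \<open>Directed multigraphs: edges are abstract identifiers of type 'e; the global functions
  src, tgt :: 'e => 'v give tail and head. A graph is a pair (V, E) of a vertex set and an
  edge set.\<close>

definition wf_digraph :: "('e \<Rightarrow> 'v) \<Rightarrow> ('e \<Rightarrow> 'v) \<Rightarrow> 'v set \<times> 'e set \<Rightarrow> bool" where
  "wf_digraph src tgt G \<longleftrightarrow> finite (fst G) \<and> finite (snd G) \<and>
     (\<forall>e\<in>snd G. src e \<in> fst G \<and> tgt e \<in> fst G)"

definition joins :: "('e \<Rightarrow> 'v) \<Rightarrow> ('e \<Rightarrow> 'v) \<Rightarrow> 'e \<Rightarrow> 'v \<Rightarrow> 'v \<Rightarrow> bool" where
  "joins src tgt e u w \<longleftrightarrow> (src e = u \<and> tgt e = w) \<or> (src e = w \<and> tgt e = u)"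

text \<open>Undirected cycle in edge set E: distinct edges es, closed vertex sequence vs whose
  interior vertices are distinct (loops and pairs of parallel edges count as cycles).\<close>
definition undirected_cycle :: "('e \<Rightarrow> 'v) \<Rightarrow> ('e \<Rightarrow> 'v) \<Rightarrow> 'e set \<Rightarrow> 'e list \<Rightarrow> 'v list \<Rightarrow> bool" where
  "undirected_cycle src tgt E es vs \<longleftrightarrow>
     es \<noteq> [] \<and> length vs = Suc (length es) \<and> set es \<subseteq> E \<and> distinct es \<and>
     hd vs = last vs \<and> distinct (tl vs) \<and>
     (\<forall>i < length es. joins src tgt (es ! i) (vs ! i) (vs ! Suc i))"

definition has_undirected_cycle :: "('e \<Rightarrow> 'v) \<Rightarrow> ('e \<Rightarrow> 'v) \<Rightarrow> 'e set \<Rightarrow> bool" where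
  "has_undirected_cycle src tgt E \<longleftrightarrow> (\<exists>es vs. undirected_cycle src tgt E es vs)"

definition spanning_incoming_forest ::
  "('e \<Rightarrow> 'v) \<Rightarrow> ('e \<Rightarrow> 'v) \<Rightarrow> 'v set \<times> 'e set \<Rightarrow> 'v set \<times> 'e set \<Rightarrow> bool" where
  "spanning_incoming_forest src tgt G F \<longleftrightarrow>
     fst F = fst G \<and> snd F \<subseteq> snd G \<and>
     \<not> has_undirected_cycle src tgt (snd F) \<and>
     (\<forall>v\<in>fst F. card {e\<in>snd F. src e = v} \<le> 1)"

definition same_component :: "('e \<Rightarrow> 'v) \<Rightarrow> ('e \<Rightarrow> 'v) \<Rightarrow> 'v set \<times> 'e set \<Rightarrow> 'v \<Rightarrow> 'v \<Rightarrow> bool" where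
  "same_component src tgt F a b \<longleftrightarrow>
     a \<in> fst F \<and> b \<in> fst F \<and> (\<lambda>u w. \<exists>e\<in>snd F. joins src tgt e u w)\<^sup>*\<^sup>* a b"

definition forests_jab ::
  "('e \<Rightarrow> 'v) \<Rightarrow> ('e \<Rightarrow> 'v) \<Rightarrow> nat \<Rightarrow> 'v \<Rightarrow> 'v \<Rightarrow> 'v set \<times> 'e set \<Rightarrow> ('v set \<times> 'e set) set" where
  "forests_jab src tgt j a b H =
     {F. spanning_incoming_forest src tgt H F \<and> card (snd F) = j \<and> same_component src tgt F a b}"

end

theory Submission
  imports Defs
begin

(* A spanning incoming forest is a functional graph: every vertex has at most one outgoing edge.
  In such a graph a vertex connected to a sink l actually reaches l along directed edges, so a
  forest F in which k and l (a sink of H) share a component contains the directed path from k to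
  l; its first edge k \<rightarrow> i is the unique edge of F leaving k, and removing it leaves a forest of K
  in which i and l still share a component. Conversely, adding an edge k \<rightarrow> i to a forest F of K
  with i and l in one component creates no cycle: a cycle would connect k and i, hence k and l,
  in F, and then F would contain a directed path from k to l, although no edge of K leaves k. *)

abbreviation undirected_adj :: "('e \<Rightarrow> 'v) \<Rightarrow> ('e \<Rightarrow> 'v) \<Rightarrow> 'e set \<Rightarrow> 'v \<Rightarrow> 'v \<Rightarrow> bool" where
  "undirected_adj src tgt E \<equiv> \<lambda>u w. \<exists>e\<in>E. joins src tgt e u w"

abbreviation directed_adj :: "('e \<Rightarrow> 'v) \<Rightarrow> ('e \<Rightarrow> 'v) \<Rightarrow> 'e set \<Rightarrow> 'v \<Rightarrow> 'v \<Rightarrow> bool" where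
  "directed_adj src tgt E \<equiv> \<lambda>u w. \<exists>e\<in>E. src e = u \<and> tgt e = w"

lemma undirected_connected_sym:
  "(undirected_adj src tgt E)\<^sup>*\<^sup>* u w \<Longrightarrow> (undirected_adj src tgt E)\<^sup>*\<^sup>* w u"
  by (rule sympD[OF symp_rtranclp]) (auto simp: symp_def joins_def)

lemma directed_adj_le_undirected_adj: "directed_adj src tgt E \<le> undirected_adj src tgt E"
  by (auto simp: joins_def)

lemma undirected_adj_mono: "E \<subseteq> E' \<Longrightarrow> undirected_adj src tgt E \<le> undirected_adj src tgt E'"
  by blast

lemma directed_path_to_sink:
  assumes "(undirected_adj src tgt E)\<^sup>*\<^sup>* u w"
    and sink: "\<forall>e\<in>E. src e \<noteq> u" and functional: "inj_on src E"
  shows "(directed_adj src tgt E)\<^sup>*\<^sup>* w u"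
  using assms(1)
proof (induction rule: rtranclp_induct)
  case base
  then show ?case by simp
next
  case (step x w)
  then obtain f where f: "f \<in> E" "joins src tgt f x w" by blast
  show ?case
  proof (cases "src f = x \<and> tgt f = w")
    case True
    from step.IH show ?thesis
    proof (cases rule: converse_rtranclpE)
      case base
      then show ?thesis using True f sink by blast
    next
      case (step z)
      \<comment> \<open>the directed path from x starts with the only edge leaving x, which is f\<close>
      then obtain g where "g \<in> E" "src g = x" "tgt g = z" by blast
      then have "g = f" using True f functional by (metis inj_onD)
      then show ?thesis using step True \<open>tgt g = z\<close> by simp
    qed
  next
    case False
    then have "directed_adj src tgt E w x" using f unfolding joins_def by blast
    then show ?thesis using step.IH by (rule converse_rtranclp_into_rtranclp)
  qed
qed

lemma directed_walk_last_exit: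
  assumes "(directed_adj src tgt E)\<^sup>*\<^sup>* k y" and "k \<noteq> y"
  obtains e where "e \<in> E" "src e = k" "(directed_adj src tgt {g\<in>E. src g \<noteq> k})\<^sup>*\<^sup>* (tgt e) y"
proof -
  let ?R = "directed_adj src tgt {g\<in>E. src g \<noteq> k}"
  have last_exit: "?R\<^sup>*\<^sup>* x y \<or> (\<exists>e\<in>E. src e = k \<and> ?R\<^sup>*\<^sup>* (tgt e) y)"
    if "(directed_adj src tgt E)\<^sup>*\<^sup>* x y" for x
    using that
  proof (induction rule: converse_rtranclp_induct)
    case base
    then show ?case by simp
  next
    case (step x z)
    then obtain g where g: "g \<in> E" "src g = x" "tgt g = z" by blast
    show ?case
    proof (cases "src g = k")
      case True
      then show ?thesis using step.IH g by blast
    next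
      case False
      then have "?R x z" using g by blast
      then show ?thesis using step.IH by (blast intro: converse_rtranclp_into_rtranclp)
    qed
  qed
  have "\<not> ?R\<^sup>*\<^sup>* k y"
  proof
    assume "?R\<^sup>*\<^sup>* k y"
    then show False by (cases rule: converse_rtranclpE) (use \<open>k \<noteq> y\<close> in auto)
  qed
  then show thesis using last_exit[OF assms(1)] that by blast
qed

lemma walk_segment_connected:
  assumes "length vs = Suc (length es)"
    and walk: "\<forall>i<length es. joins src tgt (es ! i) (vs ! i) (vs ! Suc i)"
    and "b \<le> length es" "a \<le> b" "\<forall>m. a \<le> m \<and> m < b \<longrightarrow> es ! m \<in> E"
  shows "(undirected_adj src tgt E)\<^sup>*\<^sup>* (vs ! a) (vs ! b)"
  using assms(3-5)
proof (induction b)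
  case 0
  then show ?case by simp
next
  case (Suc b)
  show ?case
  proof (cases "a = Suc b")
    case True
    then show ?thesis by simp
  next
    case False
    then have "a \<le> b" using Suc.prems by simp
    then have "(undirected_adj src tgt E)\<^sup>*\<^sup>* (vs ! a) (vs ! b)" using Suc by simp
    moreover have "es ! b \<in> E" "joins src tgt (es ! b) (vs ! b) (vs ! Suc b)"
      using walk Suc.prems \<open>a \<le> b\<close> by auto
    then have "undirected_adj src tgt E (vs ! b) (vs ! Suc b)" by blast
    ultimately show ?thesis by (rule rtranclp.rtrancl_into_rtrancl)
  qed
qed

lemma has_undirected_cycle_mono:
  "E \<subseteq> E' \<Longrightarrow> has_undirected_cycle src tgt E \<Longrightarrow> has_undirected_cycle src tgt E'"
  unfolding has_undirected_cycle_def undirected_cycle_def by (meson order_trans)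

lemma has_undirected_cycle_insertD:
  assumes "has_undirected_cycle src tgt (insert e E)" and "\<not> has_undirected_cycle src tgt E"
  shows "(undirected_adj src tgt E)\<^sup>*\<^sup>* (tgt e) (src e)"
proof -
  obtain es vs where cycle: "undirected_cycle src tgt (insert e E) es vs"
    using assms(1) unfolding has_undirected_cycle_def by blast
  then have len: "length vs = Suc (length es)" and sub: "set es \<subseteq> insert e E"
    and dist: "distinct es" and closed: "hd vs = last vs"
    and walk: "\<forall>i < length es. joins src tgt (es ! i) (vs ! i) (vs ! Suc i)"
    unfolding undirected_cycle_def by blast+
  have "e \<in> set es"
  proof (rule ccontr)
    assume "e \<notin> set es"
    then have "undirected_cycle src tgt E es vs"
      using cycle sub unfolding undirected_cycle_def by blast
    then show False using assms(2) unfolding has_undirected_cycle_def by blast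
  qed
  then obtain i where i: "i < length es" "es ! i = e" by (metis in_set_conv_nth)
  have others: "es ! m \<in> E" if "m < length es" "m \<noteq> i" for m
    using sub nth_mem[OF that(1)] nth_eq_iff_index_eq[OF dist that(1) i(1)] that(2) i(2) by auto
  \<comment> \<open>the rest of the cycle goes round from the head of e back to its tail\<close>
  have "(undirected_adj src tgt E)\<^sup>*\<^sup>* (vs ! Suc i) (vs ! length es)"
    by (rule walk_segment_connected[OF len walk]) (use i others in auto)
  moreover have "(undirected_adj src tgt E)\<^sup>*\<^sup>* (vs ! 0) (vs ! i)"
    by (rule walk_segment_connected[OF len walk]) (use i others in auto)
  moreover have "vs ! 0 = vs ! length es"
    using closed len hd_conv_nth[of vs] last_conv_nth[of vs] by force
  ultimately have closing: "(undirected_adj src tgt E)\<^sup>*\<^sup>* (vs ! Suc i) (vs ! i)" by simp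
  have "joins src tgt e (vs ! i) (vs ! Suc i)" using walk i by auto
  then consider "src e = vs ! i" "tgt e = vs ! Suc i" | "src e = vs ! Suc i" "tgt e = vs ! i"
    unfolding joins_def by blast
  then show ?thesis using closing undirected_connected_sym[OF closing] by cases simp_all
qed

lemma wf_digraph_subset:
  "wf_digraph src tgt (V, E) \<Longrightarrow> E' \<subseteq> E \<Longrightarrow> wf_digraph src tgt (V, E')"
  unfolding wf_digraph_def by (auto intro: finite_subset)

lemma mem_forests_jab_iff:
  assumes "wf_digraph src tgt (V, E)" and "a \<in> V" and "b \<in> V"
  shows "F \<in> forests_jab src tgt j a b (V, E) \<longleftrightarrow>
    (\<exists>E'. F = (V, E') \<and> E' \<subseteq> E \<and> \<not> has_undirected_cycle src tgt E' \<and> inj_on src E' \<and>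
       card E' = j \<and> (undirected_adj src tgt E')\<^sup>*\<^sup>* a b)"
proof -
  have "(\<forall>v\<in>V. card {e\<in>E'. src e = v} \<le> 1) \<longleftrightarrow> inj_on src E'" if "E' \<subseteq> E" for E'
  proof -
    have "finite E'" "src ` E' \<subseteq> V"
      using assms(1) that unfolding wf_digraph_def by (auto intro: finite_subset)
    then show ?thesis by (auto simp: card_le_Suc0_iff_eq inj_on_def)
  qed
  then show ?thesis
    using assms(2,3)
    unfolding forests_jab_def spanning_incoming_forest_def same_component_def
    by (cases F) auto
qed

lemma forest_remove_first_edge:
  assumes wf: "wf_digraph src tgt (V, E)" and "k \<in> V" "l \<in> V" "k \<noteq> l"
    and sink: "\<forall>e\<in>E. src e \<noteq> l"
    and "F \<in> forests_jab src tgt j k l (V, E)"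
  obtains e F' where "e \<in> E" "src e = k" "F = (V, snd F' \<union> {e})"
    "F' \<in> forests_jab src tgt (j - 1) (tgt e) l (V, {e'\<in>E. src e' \<noteq> k})"
proof -
  let ?K = "{e'\<in>E. src e' \<noteq> k}"
  obtain EF where F: "F = (V, EF)" and sub: "EF \<subseteq> E"
    and acyclic: "\<not> has_undirected_cycle src tgt EF" and functional: "inj_on src EF"
    and card: "card EF = j" and connected: "(undirected_adj src tgt EF)\<^sup>*\<^sup>* k l"
    using assms(6) mem_forests_jab_iff[OF wf assms(2,3)] by blast
  have "(directed_adj src tgt EF)\<^sup>*\<^sup>* k l"
    by (rule directed_path_to_sink[OF undirected_connected_sym[OF connected]])
      (use sink sub functional in auto)
  then obtain e where e: "e \<in> EF" "src e = k"
    and path: "(directed_adj src tgt {e\<in>EF. src e \<noteq> k})\<^sup>*\<^sup>* (tgt e) l"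
    using \<open>k \<noteq> l\<close> by (rule directed_walk_last_exit)
  have rest: "{e\<in>EF. src e \<noteq> k} = EF - {e}"
    using e functional by (auto dest: inj_onD)
  have "EF - {e} \<subseteq> ?K" using sub rest by blast
  moreover have "\<not> has_undirected_cycle src tgt (EF - {e})"
    using acyclic has_undirected_cycle_mono[of "EF - {e}" EF] by blast
  moreover have "inj_on src (EF - {e})" using functional by (rule inj_on_subset) blast
  moreover have "card (EF - {e}) = j - 1"
    using e card finite_subset[OF sub] wf unfolding wf_digraph_def by simp
  moreover have "(undirected_adj src tgt (EF - {e}))\<^sup>*\<^sup>* (tgt e) l"
    using path unfolding rest by (rule rtranclp_mono[OF directed_adj_le_undirected_adj, THEN predicate2D])
  moreover have "tgt e \<in> V" using wf sub e unfolding wf_digraph_def by auto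
  ultimately have "(V, EF - {e}) \<in> forests_jab src tgt (j - 1) (tgt e) l (V, ?K)"
    using mem_forests_jab_iff[OF wf_digraph_subset[OF wf, of ?K] _ \<open>l \<in> V\<close>] by blast
  moreover have "F = (V, snd (V, EF - {e}) \<union> {e})" using F e by auto
  ultimately show thesis using that e sub by blast
qed

lemma forest_add_first_edge:
  assumes wf: "wf_digraph src tgt (V, E)" and "k \<in> V" "l \<in> V" "k \<noteq> l"
    and sink: "\<forall>e\<in>E. src e \<noteq> l"
    and e: "e \<in> E" "src e = k"
    and "F' \<in> forests_jab src tgt j (tgt e) l (V, {e'\<in>E. src e' \<noteq> k})"
  shows "(V, snd F' \<union> {e}) \<in> forests_jab src tgt (Suc j) k l (V, E)"
proof -
  let ?K = "{e'\<in>E. src e' \<noteq> k}"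
  have "tgt e \<in> V" using wf e unfolding wf_digraph_def by auto
  then obtain E' where F': "F' = (V, E')" and sub: "E' \<subseteq> ?K"
    and acyclic: "\<not> has_undirected_cycle src tgt E'" and functional: "inj_on src E'"
    and card: "card E' = j" and connected: "(undirected_adj src tgt E')\<^sup>*\<^sup>* (tgt e) l"
    using assms(8) mem_forests_jab_iff[OF wf_digraph_subset[OF wf, of ?K] _ \<open>l \<in> V\<close>] by blast
  have "\<not> (undirected_adj src tgt E')\<^sup>*\<^sup>* (tgt e) k"
  proof
    assume "(undirected_adj src tgt E')\<^sup>*\<^sup>* (tgt e) k"
    then have "(undirected_adj src tgt E')\<^sup>*\<^sup>* l k"
      using rtranclp_trans[OF undirected_connected_sym[OF connected]] by blast
    then have "(directed_adj src tgt E')\<^sup>*\<^sup>* k l"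
      by (rule directed_path_to_sink) (use sink sub functional in auto)
    then show False by (cases rule: converse_rtranclpE) (use sub \<open>k \<noteq> l\<close> in auto)
  qed
  then have "\<not> has_undirected_cycle src tgt (insert e E')"
    using has_undirected_cycle_insertD[OF _ acyclic] e(2) by blast
  moreover have "inj_on src (insert e E')" using functional sub e(2) by auto
  moreover have "card (insert e E') = Suc j"
  proof -
    have "e \<notin> E'" using sub e(2) by blast
    moreover have "finite E'" using wf sub unfolding wf_digraph_def by (auto intro: finite_subset)
    ultimately show ?thesis using card by simp
  qed
  moreover have "(undirected_adj src tgt (insert e E'))\<^sup>*\<^sup>* k l"
  proof (rule converse_rtranclp_into_rtranclp)
    show "undirected_adj src tgt (insert e E') k (tgt e)" using e(2) unfolding joins_def by blast
    show "(undirected_adj src tgt (insert e E'))\<^sup>*\<^sup>* (tgt e) l"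
      using connected by (rule rtranclp_mono[OF undirected_adj_mono[OF subset_insertI], THEN predicate2D])
  qed
  moreover have "insert e E' \<subseteq> E" using sub e(1) by blast
  ultimately have "(V, insert e E') \<in> forests_jab src tgt (Suc j) k l (V, E)"
    using mem_forests_jab_iff[OF wf \<open>k \<in> V\<close> \<open>l \<in> V\<close>] by blast
  then show ?thesis using F' by simp
qed

theorem lemma2p6:
  fixes src tgt :: "'e \<Rightarrow> 'v" and VH :: "'v set" and EH :: "'e set"
    and k l :: 'v and j :: nat
  assumes "wf_digraph src tgt (VH, EH)"
    and "k \<in> VH" and "l \<in> VH" and "k \<noteq> l" and "j \<ge> 1"
    and "\<forall>e\<in>EH. src e \<noteq> l"
  shows "forests_jab src tgt j k l (VH, EH) =
    (\<Union>e\<in>{e\<in>EH. src e = k}.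
       {(VH, snd F \<union> {e}) | F. F \<in> forests_jab src tgt (j - 1) (tgt e) l (VH, {e'\<in>EH. src e' \<noteq> k})})"
proof (rule set_eqI, rule iffI)
  fix F
  assume "F \<in> forests_jab src tgt j k l (VH, EH)"
  then obtain e F' where "e \<in> EH" "src e = k" "F = (VH, snd F' \<union> {e})"
    "F' \<in> forests_jab src tgt (j - 1) (tgt e) l (VH, {e'\<in>EH. src e' \<noteq> k})"
    by (rule forest_remove_first_edge[OF assms(1-4,6)])
  then show "F \<in> (\<Union>e\<in>{e\<in>EH. src e = k}.
       {(VH, snd F \<union> {e}) | F. F \<in> forests_jab src tgt (j - 1) (tgt e) l (VH, {e'\<in>EH. src e' \<noteq> k})})"
    by blast
next
  fix F
  assume "F \<in> (\<Union>e\<in>{e\<in>EH. src e = k}.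
       {(VH, snd F \<union> {e}) | F. F \<in> forests_jab src tgt (j - 1) (tgt e) l (VH, {e'\<in>EH. src e' \<noteq> k})})"
  then obtain e F' where e: "e \<in> EH" "src e = k" and F: "F = (VH, snd F' \<union> {e})"
    and F': "F' \<in> forests_jab src tgt (j - 1) (tgt e) l (VH, {e'\<in>EH. src e' \<noteq> k})"
    by blast
  have "F \<in> forests_jab src tgt (Suc (j - 1)) k l (VH, EH)"
    unfolding F by (rule forest_add_first_edge[OF assms(1-4,6) e F'])
  then show "F \<in> forests_jab src tgt j k l (VH, EH)" using \<open>j \<ge> 1\<close> by simp
qed

end
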